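(* Fix $k\ge1$. Let $H$ be the free abelian group with basis $\{h_{i_1\dots i_{2k+3}}\mid\{i_1,\dots,i_{2k+3}\}=\{1,\dots,2k+3\}\}$. Let $W=P_{2k+3}\cap\Gamma\subset\mathbb Z\langle X\rangle$ and $W'\subseteq W$ the subgroup generated by those products $c_1\cdots c_m\in P_{2k+3}$ of commutators $c_i\in\Lambda$ that contain a commutator of length at least $4$ or at least two distinct factors of length $3$. Define $\psi:H\to W/W'$ by $\psi(h_{i_1\dots i_{2k+3}})=[x_{i_1},x_{i_2}]\cdots[x_{i_{2k-1}},x_{i_{2k}}][x_{i_{2k+1}},x_{i_{2k+2}},x_{i_{2k+3}}]+W'$. Let $Q$ be the subgroup of $H$ generated by all elements (for all index tuples with $\{i_1,\dots,i_{2k+3}\}=\{1,\dots,2k+3\}$) \begin{gather*} h_{i_1\dots i_{2l-2}\,i_{2l-1}\,i_{2l}\,i_{2l+1}\dots i_{2k+3}}+h_{i_1\dots i_{2l-2}\,i_{2l}\,i_{2l-1}\,i_{2l+1}\dots i_{2k+3}}\quad(1\le l\le k+1),\\ h_{i_1\dots i_{2l-4}\,i_{2l-3}\,i_{2l-2}\,i_{2l-1}\,i_{2l}\,i_{2l+1}\dots i_{2k+3}}-h_{i_1\dots i_{2l-4}\,i_{2l-1}\,i_{2l}\,i_{2l-3}\,i_{2l-2}\,i_{2l+1}\dots i_{2k+3}}\quad(2\le l\le k),\\ h_{i_1\dots i_{2k}\,i_{2k+1}\,i_{2k+2}\,i_{2k+3}}+h_{i_1\dots i_{2k}\,i_{2k+2}\,i_{2k+3}\,i_{2k+1}}+h_{i_1\dots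 i_{2k}\,i_{2k+3}\,i_{2k+1}\,i_{2k+2}}. \end{gather*} Then $\ker\psi=Q$.
   Context: $\mathbb Z\langle X\rangle$ is the free unital associative ring on $X=\{x_1,x_2,\dots\}$. Commutators are left-normed: $[a,b]=ab-ba$, $[a_1,\dots,a_n]=[[a_1,\dots,a_{n-1}],a_n]$. $\Lambda$ is the set of all commutators $[x_{i_1},\dots,x_{i_l}]$, $l\ge2$; $\Gamma$ is the unital subring generated by $\Lambda$. $P_n$ is the additive subgroup generated by all monomials of degree exactly $1$ in each of $x_1,\dots,x_n$ and involving no other variables. *)

theory Defs
  imports Main "HOL-Library.Poly_Mapping"
begin

text \<open>Elements of the free unital associative ring Z<X> are finitely supported
 functions from words (lists of variable indices) to int. The variable x_i
 is the word [i]; the variables of X are those with index i >= 1.\<close>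

type_synonym ncpoly = "nat list \<Rightarrow>\<^sub>0 int"

definition ncmult :: "ncpoly \<Rightarrow> ncpoly \<Rightarrow> ncpoly" where
  "ncmult p q = (\<Sum>u\<in>Poly_Mapping.keys p. \<Sum>v\<in>Poly_Mapping.keys q.
      Poly_Mapping.single (u @ v) (Poly_Mapping.lookup p u * Poly_Mapping.lookup q v))"

definition ncone :: ncpoly where
  "ncone = Poly_Mapping.single [] 1"

definition ncvar :: "nat \<Rightarrow> ncpoly" where
  "ncvar i = Poly_Mapping.single [i] 1"

definition ncsmult :: "int \<Rightarrow> ncpoly \<Rightarrow> ncpoly" where
  "ncsmult c p = ncmult (Poly_Mapping.single [] c) p"

definition ncprod :: "ncpoly list \<Rightarrow> ncpoly" where
  "ncprod ps = foldr ncmult ps ncone"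

definition comm :: "ncpoly \<Rightarrow> ncpoly \<Rightarrow> ncpoly" where
  "comm a b = ncmult a b - ncmult b a"

fun lcomm :: "nat list \<Rightarrow> ncpoly" where
  "lcomm [] = ncone"
| "lcomm (i # js) = foldl (\<lambda>c j. comm c (ncvar j)) (ncvar i) js"

definition comm_idx :: "nat list \<Rightarrow> bool" where
  "comm_idx is \<longleftrightarrow> length is \<ge> 2 \<and> (\<forall>i\<in>set is. 1 \<le> i)"

definition Lambda :: "ncpoly set" where
  "Lambda = {lcomm is | is. comm_idx is}"

inductive_set subring_gen :: "ncpoly set \<Rightarrow> ncpoly set" for S where
  one: "ncone \<in> subring_gen S"
| gen: "a \<in> S \<Longrightarrow> a \<in> subring_gen S"
| diff: "a \<in> subring_gen S \<Longrightarrow> b \<in> subring_gen S \<Longrightarrow> a - b \<in> subring_gen S"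
| mult: "a \<in> subring_gen S \<Longrightarrow> b \<in> subring_gen S \<Longrightarrow> ncmult a b \<in> subring_gen S"

definition Gamma :: "ncpoly set" where
  "Gamma = subring_gen Lambda"

inductive_set addgen :: "'a::ab_group_add set \<Rightarrow> 'a set" for S where
  zero: "0 \<in> addgen S"
| gen: "a \<in> S \<Longrightarrow> a \<in> addgen S"
| diff: "a \<in> addgen S \<Longrightarrow> b \<in> addgen S \<Longrightarrow> a - b \<in> addgen S"

definition mlwords :: "nat \<Rightarrow> nat list set" where
  "mlwords n = {w. distinct w \<and> set w = {1..n}}"

definition P :: "nat \<Rightarrow> ncpoly set" where
  "P n = addgen {Poly_Mapping.single w 1 | w. w \<in> mlwords n}"

definition W :: "nat \<Rightarrow> ncpoly set" where
  "W k = P (2*k+3) \<inter> Gamma"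

definition Wprime :: "nat \<Rightarrow> ncpoly set" where
  "Wprime k = addgen {x. \<exists>cs. x = ncprod (map lcomm cs)
      \<and> (\<forall>c\<in>set cs. comm_idx c)
      \<and> ncprod (map lcomm cs) \<in> P (2*k+3)
      \<and> ((\<exists>c\<in>set cs. 4 \<le> length c) \<or> 2 \<le> length (filter (\<lambda>c. length c = 3) cs))}"

text \<open>The free abelian group H: basis element h_w is single w 1 for w a
 permutation of [1..2k+3].\<close>
definition H :: "nat \<Rightarrow> (nat list \<Rightarrow>\<^sub>0 int) set" where
  "H k = {h. Poly_Mapping.keys h \<subseteq> mlwords (2*k+3)}"

definition hb :: "nat list \<Rightarrow> (nat list \<Rightarrow>\<^sub>0 int)" where
  "hb w = Poly_Mapping.single w 1"

definition psi_gen :: "nat \<Rightarrow> nat list \<Rightarrow> ncpoly" where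
  "psi_gen k w = ncprod (map (\<lambda>j. lcomm [w ! (2*j), w ! (2*j+1)]) [0..<k]
       @ [lcomm [w ! (2*k), w ! (2*k+1), w ! (2*k+2)]])"

text \<open>Linear extension to H, with values in Z<X>; psi itself is this followed
 by the projection to W/W'.\<close>
definition psi_lift :: "nat \<Rightarrow> (nat list \<Rightarrow>\<^sub>0 int) \<Rightarrow> ncpoly" where
  "psi_lift k h = (\<Sum>w\<in>Poly_Mapping.keys h. ncsmult (Poly_Mapping.lookup h w) (psi_gen k w))"

definition ker_psi :: "nat \<Rightarrow> (nat list \<Rightarrow>\<^sub>0 int) set" where
  "ker_psi k = {h \<in> H k. psi_lift k h \<in> Wprime k}"

definition Q :: "nat \<Rightarrow> (nat list \<Rightarrow>\<^sub>0 int) set" where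
  "Q k = addgen (
     {hb (a @ [p, q] @ b) + hb (a @ [q, p] @ b) | a p q b l.
        a @ [p, q] @ b \<in> mlwords (2*k+3) \<and> 1 \<le> l \<and> l \<le> k+1 \<and> length a = 2*l-2}
   \<union> {hb (a @ [p, q, r, s] @ b) - hb (a @ [r, s, p, q] @ b) | a p q r s b l.
        a @ [p, q, r, s] @ b \<in> mlwords (2*k+3) \<and> 2 \<le> l \<and> l \<le> k \<and> length a = 2*l-4}
   \<union> {hb (a @ [p, q, r]) + hb (a @ [q, r, p]) + hb (a @ [r, p, q]) | a p q r.
        a @ [p, q, r] \<in> mlwords (2*k+3) \<and> length a = 2*k})"

end

theory Submission
  imports Defs "HOL-Library.Function_Algebras" "HOL-Library.Multiset"
begin

text \<open>
  The generators of \<open>Q\<close> lie in the kernel: the first family is antisymmetry of \<open>[x,y]\<close>,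
  the third the Jacobi identity, and the second holds because adjacent factors \<open>[x,y]\<close> and
  \<open>[z,t]\<close> commute up to \<open>[[x,y],[z,t]] = [x,y,z,t] - [x,y,t,z]\<close>, which lies in \<open>W'\<close>.
  Descending lexicographically, modulo \<open>Q\<close> every basis element is a combination of basis
  elements indexed by normal words: increasing pairs with increasing first entries, and a
  triple starting with its least entry.

  Conversely, for each normal word \<open>\<sigma>\<close> there is a linear form on \<open>Z\<langle>X\<rangle>\<close> that vanishes on
  \<open>W'\<close> and takes the value \<open>\<delta>\<^sub>\<sigma>\<^sub>\<tau>\<close> on \<open>\<psi>(h\<^sub>\<tau>)\<close> for normal \<open>\<tau>\<close>. Group the variables into the
  blocks of \<open>\<sigma>\<close> (its pairs and its final triple) and map \<open>Z\<langle>X\<rangle>\<close> to the tensor product of the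
  free algebras on the blocks, where variables of different blocks commute. A commutator
  meeting two blocks dies there, and a multilinear product of commutators with a factor of
  length \<open>\<ge> 4\<close> or two factors of length 3 cannot keep every factor inside one block. The form
  is the coefficient of the tensor of the blocks of \<open>\<sigma>\<close>. Among normal words only \<open>\<sigma>\<close> and \<open>\<sigma>\<close>
  with its last two letters swapped have block-homogeneous factors, and the latter gets
  coefficient 0 since \<open>[a,c,b]\<close> has no monomial \<open>abc\<close>.
\<close>

section \<open>The free algebra as a monoid algebra\<close>

(* With concatenation as addition on words, the convolution product of Poly_Mapping turns
   ncpoly into the ring Z<X>. *)
instantiation list :: (type) monoid_add
begin
definition zero_list_def: "0 = []"
definition plus_list_def: "(xs::'a list) + ys = xs @ ys"
instance by standard (auto simp: zero_list_def plus_list_def)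
end

lemma frag_cmul_single: "frag_cmul c (Poly_Mapping.single u 1) = Poly_Mapping.single u c"
  by (rule poly_mapping_eqI) (simp add: lookup_single)

lemma poly_mapping_sum_single:
  "(p::'a \<Rightarrow>\<^sub>0 int) = (\<Sum>u\<in>Poly_Mapping.keys p. Poly_Mapping.single u (Poly_Mapping.lookup p u))"
  using frag_expansion[of p] by (simp add: frag_extend_def frag_cmul_single)

lemma ncmult_eq_times: "ncmult p q = p * q"
proof -
  have "p * q = (\<Sum>u\<in>Poly_Mapping.keys p. Poly_Mapping.single u (Poly_Mapping.lookup p u)) *
      (\<Sum>v\<in>Poly_Mapping.keys q. Poly_Mapping.single v (Poly_Mapping.lookup q v))"
    using poly_mapping_sum_single[of p] poly_mapping_sum_single[of q] by simp
  also have "\<dots> = ncmult p q"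
    by (simp add: ncmult_def sum_distrib_left sum_distrib_right mult_single plus_list_def
        sum.swap[of _ "Poly_Mapping.keys q"])
  finally show ?thesis by simp
qed

lemma ncone_eq_one: "ncone = 1"
  by (simp add: ncone_def zero_list_def[symmetric])

lemma ncsmult_eq_frag_cmul: "ncsmult c p = frag_cmul c p"
  unfolding ncsmult_def ncmult_eq_times zero_list_def[symmetric] mult_map_scale_conv_mult[symmetric]
  by (rule poly_mapping_eqI) (simp add: frag_cmul_def Poly_Mapping.map.rep_eq when_def)

lemma ncprod_eq_prod_list: "ncprod ps = prod_list ps"
  by (induct ps) (simp_all add: ncprod_def ncmult_eq_times ncone_eq_one)

lemma comm_eq: "comm a b = a * b - b * a"
  by (simp add: comm_def ncmult_eq_times)

lemma psi_lift_eq_frag_extend: "psi_lift k h = frag_extend (psi_gen k) h"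
  by (simp add: psi_lift_def frag_extend_def ncsmult_eq_frag_cmul)

lemma psi_lift_add: "psi_lift k (a + b) = psi_lift k a + psi_lift k b"
  by (simp add: psi_lift_eq_frag_extend frag_extend_add)

lemma psi_lift_diff: "psi_lift k (a - b) = psi_lift k a - psi_lift k b"
  by (simp add: psi_lift_eq_frag_extend frag_extend_diff)

lemma psi_lift_hb: "psi_lift k (hb w) = psi_gen k w"
  by (simp add: psi_lift_eq_frag_extend hb_def)

lemma lcomm_snoc: "lcomm (i # js @ [j]) = lcomm (i # js) * ncvar j - ncvar j * lcomm (i # js)"
  by (simp add: comm_eq)

lemma lcomm_jacobi: "lcomm [p,q,r] + lcomm [q,r,p] + lcomm [r,p,q] = 0"
  by (simp add: comm_eq algebra_simps)

lemma commutator_lcomm_pairs: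
  "lcomm [p,q] * lcomm [r,s] - lcomm [r,s] * lcomm [p,q] = lcomm [p,q,r,s] - lcomm [p,q,s,r]"
  by (simp add: comm_eq algebra_simps)

lemma keys_times_words:
  "Poly_Mapping.keys ((a::ncpoly) * b) \<subseteq>
     {u @ v | u v. u \<in> Poly_Mapping.keys a \<and> v \<in> Poly_Mapping.keys b}"
  using keys_mult[of a b] by (auto simp: plus_list_def)

lemma keys_lcomm: "Poly_Mapping.keys (lcomm cs) \<subseteq> {u. mset u = mset cs}"
proof (cases cs)
  case Nil then show ?thesis by (simp add: ncone_def)
next
  case (Cons i js)
  have "Poly_Mapping.keys (lcomm (i # js)) \<subseteq> {u. mset u = mset (i # js)}"
  proof (induct js rule: rev_induct)
    case Nil then show ?case by (simp add: ncvar_def)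
  next
    case (snoc j js)
    let ?a = "lcomm (i # js)"
    have "Poly_Mapping.keys (lcomm (i # js @ [j])) \<subseteq>
        Poly_Mapping.keys (?a * ncvar j) \<union> Poly_Mapping.keys (ncvar j * ?a)"
      unfolding lcomm_snoc by (rule keys_diff)
    also have "\<dots> \<subseteq> {u. mset u = mset (i # js @ [j])}"
    proof
      fix u assume "u \<in> Poly_Mapping.keys (?a * ncvar j) \<union> Poly_Mapping.keys (ncvar j * ?a)"
      then obtain x where "x \<in> Poly_Mapping.keys ?a" "u = x @ [j] \<or> u = [j] @ x"
        using keys_times_words[of ?a "ncvar j"] keys_times_words[of "ncvar j" ?a]
        by (auto simp: ncvar_def)
      moreover then have "mset x = mset (i # js)" using snoc by blast
      ultimately show "u \<in> {u. mset u = mset (i # js @ [j])}" by auto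
    qed
    finally show ?case .
  qed
  then show ?thesis using Cons by simp
qed

lemma keys_prod_lcomm:
  "Poly_Mapping.keys (prod_list (map lcomm cs)) \<subseteq> {u. mset u = mset (concat cs)}"
proof (induct cs)
  case Nil then show ?case by (simp add: zero_list_def)
next
  case (Cons c cs)
  show ?case
  proof
    fix u assume "u \<in> Poly_Mapping.keys (prod_list (map lcomm (c # cs)))"
    then obtain x y where "x \<in> Poly_Mapping.keys (lcomm c)"
        "y \<in> Poly_Mapping.keys (prod_list (map lcomm cs))" "u = x @ y"
      using keys_times_words[of "lcomm c" "prod_list (map lcomm cs)"] by auto
    moreover then have "mset x = mset c" "mset y = mset (concat cs)"
      using keys_lcomm[of c] Cons by blast+
    ultimately show "u \<in> {u. mset u = mset (concat (c # cs))}" by auto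
  qed
qed

lemma mlwords_mset_eq:
  assumes "mset u = mset w" "w \<in> mlwords n" shows "u \<in> mlwords n"
  using assms mset_eq_setD[OF assms(1)] mset_eq_imp_distinct_iff[OF assms(1)]
  by (simp add: mlwords_def)

lemma length_mlwords: "w \<in> mlwords n \<Longrightarrow> length w = n"
  unfolding mlwords_def using distinct_card[of w] by auto

lemma mlwords_swap_pair: "a @ [p,q] @ b \<in> mlwords n \<Longrightarrow> a @ [q,p] @ b \<in> mlwords n"
  by (auto simp: mlwords_def)

lemma mlwords_swap_pairs: "a @ [p,q,r,s] @ b \<in> mlwords n \<Longrightarrow> a @ [r,s,p,q] @ b \<in> mlwords n"
  by (auto simp: mlwords_def)

lemma mlwords_rotate_triple: "a @ [p,q,r] \<in> mlwords n \<Longrightarrow> a @ [q,r,p] \<in> mlwords n"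
  by (auto simp: mlwords_def)

lemma addgen_least:
  assumes "S \<subseteq> G" "0 \<in> G" "\<And>a b. a \<in> G \<Longrightarrow> b \<in> G \<Longrightarrow> a - b \<in> G"
  shows "addgen S \<subseteq> G"
proof
  fix x assume "x \<in> addgen S"
  then show "x \<in> G" by (induct rule: addgen.induct) (use assms in auto)
qed

lemma P_iff_keys: "x \<in> P n \<longleftrightarrow> Poly_Mapping.keys x \<subseteq> mlwords n"
proof
  assume "x \<in> P n"
  then show "Poly_Mapping.keys x \<subseteq> mlwords n"
    unfolding P_def by (induct rule: addgen.induct) (auto dest!: subsetD[OF keys_diff])
next
  assume "Poly_Mapping.keys x \<subseteq> mlwords n"
  then show "x \<in> P n"
    unfolding P_def by (induct x rule: frag_induction) (auto intro: addgen.intros)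
qed

lemma prod_lcomm_in_Wprime:
  assumes "\<forall>c\<in>set cs. 2 \<le> length c" "mset (concat cs) = mset w" "w \<in> mlwords (2*k+3)"
    "\<exists>c\<in>set cs. 4 \<le> length c"
  shows "prod_list (map lcomm cs) \<in> Wprime k"
proof -
  have "set (concat cs) = {1..2*k+3}"
    using assms(3) mset_eq_setD[OF assms(2)] by (simp add: mlwords_def)
  then have "\<forall>c\<in>set cs. comm_idx c"
    using assms(1) by (fastforce simp: comm_idx_def)
  moreover have "prod_list (map lcomm cs) \<in> P (2*k+3)"
    unfolding P_iff_keys using keys_prod_lcomm[of cs] mlwords_mset_eq[OF _ assms(3)] assms(2)
    by auto
  ultimately show ?thesis
    unfolding Wprime_def by (intro addgen.gen) (use assms(4) in \<open>auto simp: ncprod_eq_prod_list\<close>)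
qed

lemma ker_psi_diff: "a \<in> ker_psi k \<Longrightarrow> b \<in> ker_psi k \<Longrightarrow> a - b \<in> ker_psi k"
  unfolding ker_psi_def H_def using keys_diff[of a b]
  by (auto simp: psi_lift_diff Wprime_def intro: addgen.diff)

lemma zero_in_ker_psi: "0 \<in> ker_psi k"
  by (simp add: ker_psi_def H_def psi_lift_def Wprime_def addgen.zero)

fun pair_blocks :: "nat list \<Rightarrow> nat list list" where
  "pair_blocks (x # y # r) = [x, y] # pair_blocks r"
| "pair_blocks _ = []"

fun psi_blocks :: "nat \<Rightarrow> nat list \<Rightarrow> nat list list" where
  "psi_blocks 0 w = [take 3 w]"
| "psi_blocks (Suc m) w = take 2 w # psi_blocks m (drop 2 w)"

lemma psi_blocks_nth:
  "2*k+3 \<le> length w \<Longrightarrow> psi_blocks k w =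
     map (\<lambda>j. [w ! (2*j), w ! (2*j+1)]) [0..<k] @ [[w ! (2*k), w ! (2*k+1), w ! (2*k+2)]]"
proof (induct k arbitrary: w)
  case 0
  then show ?case by (cases w; cases "tl w"; cases "tl (tl w)") (auto simp: numeral_3_eq_3)
next
  case (Suc m)
  have le: "2 \<le> length w" using Suc.prems by simp
  have "psi_blocks m (drop 2 w) = map (\<lambda>j. [w ! (2*Suc j), w ! (2*Suc j+1)]) [0..<m] @
      [[w ! (2*Suc m), w ! (2*Suc m+1), w ! (2*Suc m+2)]]"
    using Suc.hyps[of "drop 2 w"] Suc.prems unfolding nth_drop[OF le] by (simp add: ac_simps)
  moreover have "take 2 w = [w!0, w!1]"
    using Suc.prems by (cases w; cases "tl w") auto
  moreover have "[0..<Suc m] = 0 # map Suc [0..<m]"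
    by (simp add: map_Suc_upt upt_conv_Cons)
  ultimately show ?case by (simp add: o_def)
qed

lemma psi_gen_eq_prod_blocks:
  "length w = 2*k+3 \<Longrightarrow> psi_gen k w = prod_list (map lcomm (psi_blocks k w))"
  by (simp add: psi_gen_def ncprod_eq_prod_list psi_blocks_nth o_def)

lemma psi_blocks_append:
  "length a = 2*j \<Longrightarrow> j \<le> m \<Longrightarrow> psi_blocks m (a @ r) = pair_blocks a @ psi_blocks (m - j) r"
proof (induct j arbitrary: a m)
  case 0 then show ?case by simp
next
  case (Suc j)
  then obtain x y a' where "a = x # y # a'" "length a' = 2*j"
    by (cases a; cases "tl a") auto
  moreover obtain m' where "m = Suc m'" "j \<le> m'" using Suc.prems by (cases m) auto
  ultimately show ?case using Suc.hyps by simp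
qed

lemma psi_gen_append:
  assumes "length a = 2*j" "j \<le> k" "length (a @ r) = 2*k+3"
  shows "psi_gen k (a @ r) =
    prod_list (map lcomm (pair_blocks a)) * prod_list (map lcomm (psi_blocks (k - j) r))"
  using assms by (simp add: psi_gen_eq_prod_blocks psi_blocks_append)

lemma concat_pair_blocks: "even (length a) \<Longrightarrow> concat (pair_blocks a) = a"
  by (induct a rule: pair_blocks.induct) auto

lemma concat_psi_blocks: "length w = 2*m+3 \<Longrightarrow> concat (psi_blocks m w) = w"
  by (induct m arbitrary: w) auto

lemma length_pair_blocks_factor: "c \<in> set (pair_blocks a) \<Longrightarrow> length c = 2"
  by (induct a rule: pair_blocks.induct) auto

lemma length_psi_blocks_factor:
  "length w = 2*m+3 \<Longrightarrow> c \<in> set (psi_blocks m w) \<Longrightarrow> length c = 2 \<or> length c = 3"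
proof (induct m arbitrary: w)
  case (Suc m)
  then have "c = take 2 w \<or> c \<in> set (psi_blocks m (drop 2 w))" by simp
  then show ?case using Suc.hyps[of "drop 2 w"] Suc.prems by auto
qed auto

section \<open>The relations of \<open>Q\<close> lie in the kernel\<close>

lemma psi_gen_swap_pair:
  assumes w: "a @ [p,q] @ b \<in> mlwords (2*k+3)" and l: "1 \<le> l" "l \<le> k+1" "length a = 2*l-2"
  shows "psi_gen k (a @ [p,q] @ b) + psi_gen k (a @ [q,p] @ b) = 0"
proof -
  have aj: "length a = 2*(l-1)" "l-1 \<le> k" using l by auto
  have lw: "length (a @ [p,q] @ b) = 2*k+3" using length_mlwords[OF w] by simp
  then have lb: "length b = 2*(k-(l-1)) + 1" using aj by simp
  let ?A = "prod_list (map lcomm (pair_blocks a))"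
  have e: "psi_gen k (a @ [x,y] @ b) = ?A * prod_list (map lcomm (psi_blocks (k-(l-1)) ([x,y] @ b)))"
    for x y using psi_gen_append[OF aj] lw by simp
  show ?thesis
  proof (cases "k - (l-1)")
    case 0
    then obtain r where "b = [r]" using lb by (cases b) auto
    then show ?thesis unfolding e using 0 by (simp add: comm_eq algebra_simps)
  next
    case (Suc m)
    then show ?thesis unfolding e by (simp add: comm_eq algebra_simps)
  qed
qed

lemma psi_gen_rotate_triple:
  assumes "length a = 2*k"
  shows "psi_gen k (a @ [p,q,r]) + psi_gen k (a @ [q,r,p]) + psi_gen k (a @ [r,p,q]) = 0"
proof -
  let ?A = "prod_list (map lcomm (pair_blocks a))"
  have e: "psi_gen k (a @ [x,y,z]) = ?A * lcomm [x,y,z]" for x y z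
    using psi_gen_append[OF assms order_refl, of "[x,y,z]"] assms by simp
  have "?A * lcomm [p,q,r] + ?A * lcomm [q,r,p] + ?A * lcomm [r,p,q] =
      ?A * (lcomm [p,q,r] + lcomm [q,r,p] + lcomm [r,p,q])"
    by (simp only: distrib_left)
  then show ?thesis unfolding e lcomm_jacobi by simp
qed

lemma psi_gen_swap_pairs:
  assumes w: "a @ [p,q,r,s] @ b \<in> mlwords (2*k+3)" and l: "2 \<le> l" "l \<le> k" "length a = 2*l-4"
  shows "psi_gen k (a @ [p,q,r,s] @ b) - psi_gen k (a @ [r,s,p,q] @ b) \<in> Wprime k"
proof -
  define m where "m = k - l"
  have aj: "length a = 2*(l-2)" "l-2 \<le> k" "k - (l-2) = Suc (Suc m)" using l by (auto simp: m_def)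
  have lw: "length (a @ [p,q,r,s] @ b) = 2*k+3" using length_mlwords[OF w] by simp
  then have lb: "length b = 2*m + 3" using aj l by (simp add: m_def)
  define A where "A = prod_list (map lcomm (pair_blocks a))"
  define B where "B = prod_list (map lcomm (psi_blocks m b))"
  have factor: "prod_list (map lcomm (pair_blocks a @ [x] @ psi_blocks m b)) = A * (lcomm x * B)" for x
    by (simp add: A_def B_def)
  have e: "psi_gen k (a @ [x,y,z,t] @ b) = A * (lcomm [x,y] * (lcomm [z,t] * B))" for x y z t
    using psi_gen_append[OF aj(1,2), of "[x,y,z,t] @ b"] lw aj(3) by (simp add: A_def B_def)
  have "psi_gen k (a @ [p,q,r,s] @ b) - psi_gen k (a @ [r,s,p,q] @ b)
      = A * ((lcomm [p,q] * lcomm [r,s] - lcomm [r,s] * lcomm [p,q]) * B)"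
    unfolding e by (simp add: algebra_simps)
  also have "\<dots> = A * (lcomm [p,q,r,s] * B) - A * (lcomm [p,q,s,r] * B)"
    unfolding commutator_lcomm_pairs by (simp add: algebra_simps)
  finally have d: "psi_gen k (a @ [p,q,r,s] @ b) - psi_gen k (a @ [r,s,p,q] @ b) =
      A * (lcomm [p,q,r,s] * B) - A * (lcomm [p,q,s,r] * B)" .
  have "A * (lcomm x * B) \<in> Wprime k" if "length x = 4" "a @ x @ b \<in> mlwords (2*k+3)" for x
  proof -
    let ?cs = "pair_blocks a @ [x] @ psi_blocks m b"
    have "concat ?cs = a @ x @ b"
      using concat_pair_blocks[of a] concat_psi_blocks[OF lb] aj by simp
    moreover have "\<forall>c\<in>set ?cs. 2 \<le> length c"
      using length_pair_blocks_factor length_psi_blocks_factor[OF lb] that(1) by fastforce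
    ultimately have "prod_list (map lcomm ?cs) \<in> Wprime k"
      using that by (intro prod_lcomm_in_Wprime[of ?cs "a @ x @ b"]) auto
    then show ?thesis unfolding factor .
  qed
  note in_Wprime = this
  have "A * (lcomm [p,q,r,s] * B) \<in> Wprime k" "A * (lcomm [p,q,s,r] * B) \<in> Wprime k"
    using in_Wprime[of "[p,q,r,s]"] in_Wprime[of "[p,q,s,r]"] w
      mlwords_swap_pair[of "a @ [p,q]" r s b "2*k+3"] by simp_all
  then show ?thesis
    unfolding d Wprime_def by (rule addgen.diff)
qed

definition Q_gens :: "nat \<Rightarrow> (nat list \<Rightarrow>\<^sub>0 int) set" where
  "Q_gens k = {hb (a @ [p, q] @ b) + hb (a @ [q, p] @ b) | a p q b l.
        a @ [p, q] @ b \<in> mlwords (2*k+3) \<and> 1 \<le> l \<and> l \<le> k+1 \<and> length a = 2*l-2}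
   \<union> {hb (a @ [p, q, r, s] @ b) - hb (a @ [r, s, p, q] @ b) | a p q r s b l.
        a @ [p, q, r, s] @ b \<in> mlwords (2*k+3) \<and> 2 \<le> l \<and> l \<le> k \<and> length a = 2*l-4}
   \<union> {hb (a @ [p, q, r]) + hb (a @ [q, r, p]) + hb (a @ [r, p, q]) | a p q r.
        a @ [p, q, r] \<in> mlwords (2*k+3) \<and> length a = 2*k}"

lemma Q_eq_addgen_Q_gens: "Q k = addgen (Q_gens k)"
  by (simp add: Q_def Q_gens_def)

lemma hb_in_H: "w \<in> mlwords (2*k+3) \<Longrightarrow> hb w \<in> H k"
  by (simp add: H_def hb_def)

lemma H_add: "a \<in> H k \<Longrightarrow> b \<in> H k \<Longrightarrow> a + b \<in> H k"
  unfolding H_def using keys_add[of a b] by auto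

lemma H_diff: "a \<in> H k \<Longrightarrow> b \<in> H k \<Longrightarrow> a - b \<in> H k"
  unfolding H_def using keys_diff[of a b] by auto

lemma Q_gens_subset_ker_psi: "Q_gens k \<subseteq> ker_psi k"
proof
  fix g assume "g \<in> Q_gens k"
  then consider
      (swap_pair) a p q b l where "g = hb (a @ [p, q] @ b) + hb (a @ [q, p] @ b)"
        "a @ [p, q] @ b \<in> mlwords (2*k+3)" "1 \<le> l" "l \<le> k+1" "length a = 2*l-2"
    | (swap_pairs) a p q r s b l where "g = hb (a @ [p, q, r, s] @ b) - hb (a @ [r, s, p, q] @ b)"
        "a @ [p, q, r, s] @ b \<in> mlwords (2*k+3)" "2 \<le> l" "l \<le> k" "length a = 2*l-4"
    | (rotate) a p q r where "g = hb (a @ [p, q, r]) + hb (a @ [q, r, p]) + hb (a @ [r, p, q])"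
        "a @ [p, q, r] \<in> mlwords (2*k+3)" "length a = 2*k"
    unfolding Q_gens_def by blast
  then show "g \<in> ker_psi k"
  proof cases
    case swap_pair
    then have "g \<in> H k" "psi_lift k g = 0"
      using psi_gen_swap_pair[OF swap_pair(2-5)] mlwords_swap_pair[OF swap_pair(2)]
      by (simp_all add: H_add hb_in_H psi_lift_add psi_lift_hb)
    then show ?thesis by (simp add: ker_psi_def Wprime_def addgen.zero)
  next
    case swap_pairs
    then have "g \<in> H k" "psi_lift k g \<in> Wprime k"
      using psi_gen_swap_pairs[OF swap_pairs(2-5)] mlwords_swap_pairs[OF swap_pairs(2)]
      by (simp_all add: H_diff hb_in_H psi_lift_diff psi_lift_hb)
    then show ?thesis by (simp add: ker_psi_def)
  next
    case rotate
    then have "g \<in> H k" "psi_lift k g = 0"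
      using psi_gen_rotate_triple[OF rotate(3)] mlwords_rotate_triple[OF rotate(2)]
        mlwords_rotate_triple[OF mlwords_rotate_triple[OF rotate(2)]]
      by (simp_all add: H_add hb_in_H psi_lift_add psi_lift_hb)
    then show ?thesis by (simp add: ker_psi_def Wprime_def addgen.zero)
  qed
qed

lemma Q_subset_ker_psi: "Q k \<subseteq> ker_psi k"
  unfolding Q_eq_addgen_Q_gens
  by (rule addgen_least[OF Q_gens_subset_ker_psi zero_in_ker_psi ker_psi_diff])

section \<open>Splitting words into blocks\<close>

text \<open>
  A map \<open>\<beta>\<close> from variables to block numbers sends a word \<open>u\<close> to the tuple of its subwords in
  the letters of each block. Tuples of words form a monoid under slotwise concatenation, and
  the induced ring homomorphism \<open>block_proj \<beta>\<close> realizes the map from \<open>Z\<langle>X\<rangle>\<close> to the tensor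
  product of the free algebras on the blocks.
\<close>

type_synonym blocked_word = "nat \<Rightarrow> nat list"

definition block_split :: "(nat \<Rightarrow> nat) \<Rightarrow> nat list \<Rightarrow> blocked_word" where
  "block_split \<beta> u = (\<lambda>s. filter (\<lambda>i. \<beta> i = s) u)"

definition block_proj :: "(nat \<Rightarrow> nat) \<Rightarrow> ncpoly \<Rightarrow> (blocked_word \<Rightarrow>\<^sub>0 int)" where
  "block_proj \<beta> p = frag_extend (\<lambda>u. frag_of (block_split \<beta> u)) p"

lemma zero_blocked_word: "(0::blocked_word) = (\<lambda>_. [])"
  by (simp add: zero_fun_def zero_list_def)

lemma block_split_append: "block_split \<beta> (u @ v) = block_split \<beta> u + block_split \<beta> v"
  by (simp add: block_split_def plus_fun_def plus_list_def)

lemma block_proj_zero: "block_proj \<beta> 0 = 0"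
  by (simp add: block_proj_def)

lemma block_proj_add: "block_proj \<beta> (a + b) = block_proj \<beta> a + block_proj \<beta> b"
  by (simp add: block_proj_def frag_extend_add)

lemma block_proj_diff: "block_proj \<beta> (a - b) = block_proj \<beta> a - block_proj \<beta> b"
  by (simp add: block_proj_def frag_extend_diff)

lemma block_proj_single: "block_proj \<beta> (frag_of u) = frag_of (block_split \<beta> u)"
  by (simp add: block_proj_def)

lemma block_proj_mult: "block_proj \<beta> (x * y) = block_proj \<beta> x * block_proj \<beta> y"
proof -
  have "Poly_Mapping.keys x \<subseteq> UNIV" by simp
  moreover have "block_proj \<beta> (frag_of u * y) = block_proj \<beta> (frag_of u) * block_proj \<beta> y" for u
  proof -
    have "Poly_Mapping.keys y \<subseteq> UNIV" by simp
    then show ?thesis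
      by (induct y rule: frag_induction)
        (simp_all add: block_proj_zero block_proj_diff block_proj_single mult_single
          plus_list_def block_split_append algebra_simps)
  qed
  ultimately show ?thesis
    by (induct x rule: frag_induction) (simp_all add: block_proj_zero block_proj_diff algebra_simps)
qed

lemma block_proj_one: "block_proj \<beta> 1 = 1"
proof -
  have one: "(1::ncpoly) = frag_of []" by (simp add: zero_list_def[symmetric])
  show ?thesis
    unfolding one block_proj_single by (simp add: block_split_def zero_blocked_word[symmetric])
qed

lemma block_proj_prod_list: "block_proj \<beta> (prod_list xs) = prod_list (map (block_proj \<beta>) xs)"
  by (induct xs) (simp_all add: block_proj_one block_proj_mult)

definition block_elems :: "nat \<Rightarrow> (blocked_word \<Rightarrow>\<^sub>0 int) set" where
  "block_elems s = {a. \<forall>\<kappa>\<in>Poly_Mapping.keys a. \<forall>t. t \<noteq> s \<longrightarrow> \<kappa> t = []}"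

lemma block_elems_mult: "a \<in> block_elems s \<Longrightarrow> b \<in> block_elems s \<Longrightarrow> a * b \<in> block_elems s"
  unfolding block_elems_def using keys_mult[of a b] by (fastforce simp: plus_fun_def plus_list_def)

lemma block_elems_diff: "a \<in> block_elems s \<Longrightarrow> b \<in> block_elems s \<Longrightarrow> a - b \<in> block_elems s"
  unfolding block_elems_def using keys_diff[of a b] by blast

lemma block_elems_commute:
  assumes a: "a \<in> block_elems s" and b: "b \<in> block_elems s'" and "s \<noteq> s'"
  shows "a * b = b * a"
proof -
  have single: "frag_of x * frag_of y = frag_of y * frag_of x"
    if "\<forall>t. t \<noteq> s \<longrightarrow> x t = []" "\<forall>t. t \<noteq> s' \<longrightarrow> y t = []" for x y :: blocked_word
  proof -
    have "x t @ y t = y t @ x t" for t using that \<open>s \<noteq> s'\<close> by (cases "t = s") auto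
    then show ?thesis by (simp add: mult_single plus_fun_def plus_list_def)
  qed
  have "Poly_Mapping.keys a \<subseteq> {\<kappa>. \<forall>t. t \<noteq> s \<longrightarrow> \<kappa> t = []}" using a by (auto simp: block_elems_def)
  moreover have "frag_of x * b = b * frag_of x" if "\<forall>t. t \<noteq> s \<longrightarrow> x t = []" for x
  proof -
    have "Poly_Mapping.keys b \<subseteq> {\<kappa>. \<forall>t. t \<noteq> s' \<longrightarrow> \<kappa> t = []}" using b by (auto simp: block_elems_def)
    then show ?thesis
      by (induct b rule: frag_induction) (simp_all add: single[OF that] algebra_simps)
  qed
  ultimately show ?thesis
    by (induct a rule: frag_induction) (simp_all add: algebra_simps)
qed

lemma block_proj_var: "block_proj \<beta> (ncvar i) \<in> block_elems (\<beta> i)"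
  by (simp add: ncvar_def block_proj_single block_elems_def block_split_def)

lemma block_proj_lcomm_homogeneous:
  "\<forall>j\<in>set js. \<beta> j = \<beta> i \<Longrightarrow> block_proj \<beta> (lcomm (i # js)) \<in> block_elems (\<beta> i)"
proof (induct js rule: rev_induct)
  case Nil then show ?case using block_proj_var by simp
next
  case (snoc j js)
  then show ?case unfolding lcomm_snoc block_proj_diff block_proj_mult
    using block_proj_var[of \<beta> j] by (auto intro!: block_elems_diff block_elems_mult)
qed

lemma block_proj_lcomm_mixed:
  "\<not> (\<forall>j\<in>set js. \<beta> j = \<beta> i) \<Longrightarrow> block_proj \<beta> (lcomm (i # js)) = 0"
proof (induct js rule: rev_induct)
  case Nil then show ?case by simp
next
  case (snoc j js)
  show ?case
  proof (cases "\<forall>j\<in>set js. \<beta> j = \<beta> i")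
    case True
    then have "\<beta> j \<noteq> \<beta> i" using snoc.prems by auto
    then show ?thesis unfolding lcomm_snoc block_proj_diff block_proj_mult
      using block_elems_commute[OF block_proj_lcomm_homogeneous[OF True] block_proj_var[of \<beta> j]]
      by simp
  next
    case False
    then show ?thesis unfolding lcomm_snoc block_proj_diff block_proj_mult using snoc.hyps by simp
  qed
qed

definition at_block :: "nat \<Rightarrow> nat list \<Rightarrow> blocked_word" where
  "at_block s u = (\<lambda>t. if t = s then u else [])"

lemma block_proj_lcomm_at_block:
  assumes "\<forall>x\<in>set cs. \<beta> x = s"
  shows "block_proj \<beta> (lcomm cs) = frag_extend (\<lambda>u. frag_of (at_block s u)) (lcomm cs)"
  unfolding block_proj_def
proof (rule frag_extend_eq)
  fix u assume "u \<in> Poly_Mapping.keys (lcomm cs)"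
  then have "set u = set cs" using keys_lcomm[of cs] by (auto dest: mset_eq_setD)
  then have "block_split \<beta> u = at_block s u" using assms
    by (auto simp: block_split_def at_block_def fun_eq_iff filter_id_conv filter_empty_conv)
  then show "frag_of (block_split \<beta> u) = frag_of (at_block s u)" by simp
qed

lemma lookup_frag_extend_at_block:
  "Poly_Mapping.lookup (frag_extend (\<lambda>u. frag_of (at_block s u)) p) (at_block s v) =
     Poly_Mapping.lookup p v"
proof -
  have "Poly_Mapping.keys p \<subseteq> UNIV" by simp
  moreover have "at_block s x = at_block s v \<longleftrightarrow> x = v" "at_block s v = at_block s x \<longleftrightarrow> v = x" for x
    by (auto simp: at_block_def fun_eq_iff)
  ultimately show ?thesis
    by (induct p rule: frag_induction) (simp_all add: frag_extend_diff lookup_minus)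
qed

lemma plus_at_block_iff:
  assumes x: "\<forall>t. t \<noteq> j \<longrightarrow> x t = []" and y: "\<forall>t\<le>j. y t = []"
  shows "x + y = \<kappa> \<longleftrightarrow> (\<forall>t<j. \<kappa> t = []) \<and> at_block j (\<kappa> j) = x \<and> \<kappa>(j := []) = y"
proof
  assume "x + y = \<kappa>"
  then have "\<kappa> t = x t @ y t" for t by (auto simp: plus_fun_def plus_list_def)
  then show "(\<forall>t<j. \<kappa> t = []) \<and> at_block j (\<kappa> j) = x \<and> \<kappa>(j := []) = y"
    using x y by (auto simp: at_block_def fun_eq_iff)
next
  assume h: "(\<forall>t<j. \<kappa> t = []) \<and> at_block j (\<kappa> j) = x \<and> \<kappa>(j := []) = y"
  have "x t @ y t = \<kappa> t" for t
  proof (cases t j rule: linorder_cases)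
    case equal
    have "at_block j (\<kappa> j) j = x j" using h by simp
    then show ?thesis using equal y by (simp add: at_block_def)
  next
    case greater
    have "(\<kappa>(j := [])) t = y t" using h by simp
    then show ?thesis using greater x by simp
  qed (use h x y in auto)
  then show "x + y = \<kappa>" by (auto simp: plus_fun_def plus_list_def fun_eq_iff)
qed

lemma lookup_block_elem_times:
  assumes X: "X \<in> block_elems j" and Y: "Poly_Mapping.keys Y \<subseteq> {\<kappa>. \<forall>t\<le>j. \<kappa> t = []}"
    and \<kappa>: "\<forall>t<j. \<kappa> t = []"
  shows "Poly_Mapping.lookup (X * Y) \<kappa> =
    Poly_Mapping.lookup X (at_block j (\<kappa> j)) * Poly_Mapping.lookup Y (\<kappa>(j := []))"
proof -
  have "Poly_Mapping.keys X \<subseteq> {x. \<forall>t. t \<noteq> j \<longrightarrow> x t = []}" using X by (auto simp: block_elems_def)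
  moreover have "Poly_Mapping.lookup (frag_of x * Y) \<kappa> =
      Poly_Mapping.lookup (frag_of x) (at_block j (\<kappa> j)) * Poly_Mapping.lookup Y (\<kappa>(j := []))"
    if x: "\<forall>t. t \<noteq> j \<longrightarrow> x t = []" for x
    using Y
  proof (induct Y rule: frag_induction)
    case (one y)
    then have "\<kappa> = x + y \<longleftrightarrow> at_block j (\<kappa> j) = x \<and> \<kappa>(j := []) = y"
      using plus_at_block_iff[OF x, of y \<kappa>] \<kappa> by auto
    then show ?case by (auto simp: mult_single fun_upd_def)
  qed (auto simp: algebra_simps lookup_minus)
  ultimately show ?thesis
    by (induct X rule: frag_induction) (auto simp: algebra_simps lookup_minus)
qed

lemma keys_prod_list_block_elems:
  assumes "\<forall>i<length Xs. Xs ! i \<in> block_elems (j + i)"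
  shows "Poly_Mapping.keys (prod_list Xs) \<subseteq> {\<kappa>. \<forall>t. t < j \<or> j + length Xs \<le> t \<longrightarrow> \<kappa> t = []}"
  using assms
proof (induct Xs arbitrary: j)
  case Nil
  then show ?case by (simp add: zero_blocked_word)
next
  case (Cons X Xs)
  have X: "X \<in> block_elems j" using Cons.prems[rule_format, of 0] by simp
  have "\<forall>i<length Xs. Xs ! i \<in> block_elems (Suc j + i)" using Cons.prems by fastforce
  note IH = Cons.hyps[OF this]
  show ?case
  proof
    fix \<kappa> assume "\<kappa> \<in> Poly_Mapping.keys (prod_list (X # Xs))"
    then obtain x y where "x \<in> Poly_Mapping.keys X" "y \<in> Poly_Mapping.keys (prod_list Xs)" "\<kappa> = x + y"
      using keys_mult[of X "prod_list Xs"] by auto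
    with X IH show "\<kappa> \<in> {\<kappa>. \<forall>t. t < j \<or> j + length (X # Xs) \<le> t \<longrightarrow> \<kappa> t = []}"
      by (fastforce simp: block_elems_def plus_fun_def plus_list_def)
  qed
qed

lemma lookup_prod_list_block_elems:
  assumes "\<forall>i<length Xs. Xs ! i \<in> block_elems (j + i)"
    and "\<forall>t. t < j \<or> j + length Xs \<le> t \<longrightarrow> \<kappa> t = []"
  shows "Poly_Mapping.lookup (prod_list Xs) \<kappa> =
    (\<Prod>i<length Xs. Poly_Mapping.lookup (Xs ! i) (at_block (j + i) (\<kappa> (j + i))))"
  using assms
proof (induct Xs arbitrary: j \<kappa>)
  case Nil
  then have "\<kappa> = 0" by (simp add: zero_blocked_word fun_eq_iff) (meson not_le)
  then show ?case by (simp add: lookup_one zero_fun_def)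
next
  case (Cons X Xs)
  have X: "X \<in> block_elems j" using Cons.prems(1)[rule_format, of 0] by simp
  have Xs: "\<forall>i<length Xs. Xs ! i \<in> block_elems (Suc j + i)" using Cons.prems(1) by fastforce
  have "Poly_Mapping.keys (prod_list Xs) \<subseteq> {\<kappa>. \<forall>t\<le>j. \<kappa> t = []}"
    using keys_prod_list_block_elems[OF Xs] by fastforce
  then have "Poly_Mapping.lookup (prod_list (X # Xs)) \<kappa> =
      Poly_Mapping.lookup X (at_block j (\<kappa> j)) * Poly_Mapping.lookup (prod_list Xs) (\<kappa>(j := []))"
    using lookup_block_elem_times[OF X] Cons.prems(2) by simp
  also have "Poly_Mapping.lookup (prod_list Xs) (\<kappa>(j := [])) =
      (\<Prod>i<length Xs. Poly_Mapping.lookup (Xs ! i) (at_block (Suc j + i) (\<kappa> (Suc j + i))))"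
  proof -
    have "\<forall>t. t < Suc j \<or> Suc j + length Xs \<le> t \<longrightarrow> (\<kappa>(j := [])) t = []"
      using Cons.prems(2) by auto
    then show ?thesis using Cons.hyps[OF Xs] by simp
  qed
  finally show ?case by (simp add: prod.lessThan_Suc_shift del: prod.lessThan_Suc)
qed

definition word_pos :: "nat list \<Rightarrow> nat \<Rightarrow> nat" where
  "word_pos \<sigma> x = length (takeWhile (\<lambda>y. y \<noteq> x) \<sigma>)"

definition block_of :: "nat \<Rightarrow> nat list \<Rightarrow> nat \<Rightarrow> nat" where
  "block_of k \<sigma> x = min (word_pos \<sigma> x div 2) k"

lemma word_pos_nth: "distinct \<sigma> \<Longrightarrow> p < length \<sigma> \<Longrightarrow> word_pos \<sigma> (\<sigma> ! p) = p"
proof -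
  assume "distinct \<sigma>" "p < length \<sigma>"
  then have "takeWhile (\<lambda>y. y \<noteq> \<sigma> ! p) \<sigma> = take p \<sigma>"
    by (intro takeWhile_eq_take_P_nth) (auto simp: nth_eq_iff_index_eq)
  then show ?thesis using \<open>p < length \<sigma>\<close> by (simp add: word_pos_def)
qed

lemma block_of_nth: "distinct \<sigma> \<Longrightarrow> p < length \<sigma> \<Longrightarrow> block_of k \<sigma> (\<sigma> ! p) = min (p div 2) k"
  by (simp add: block_of_def word_pos_nth)

lemma mlwords_distinct_length:
  "\<sigma> \<in> mlwords (2*k+3) \<Longrightarrow> distinct \<sigma> \<and> length \<sigma> = 2*k+3"
  using length_mlwords[of \<sigma>] by (simp add: mlwords_def)

lemma block_eq_image:
  assumes "\<sigma> \<in> mlwords (2*k+3)"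
  shows "{x \<in> set \<sigma>. block_of k \<sigma> x = s} = (!) \<sigma> ` {p. p < 2*k+3 \<and> min (p div 2) k = s}"
  using mlwords_distinct_length[OF assms] by (auto simp: in_set_conv_nth block_of_nth)

lemma last_block_eq:
  assumes "\<sigma> \<in> mlwords (2*k+3)"
  shows "{x \<in> set \<sigma>. block_of k \<sigma> x = k} = {\<sigma> ! (2*k), \<sigma> ! (2*k+1), \<sigma> ! (2*k+2)}"
proof -
  have "{p. p < 2*k+3 \<and> min (p div 2) k = k} = {2*k, 2*k+1, 2*k+2}" by auto
  then show ?thesis using block_eq_image[OF assms, of k] by simp
qed

lemma pair_block_eq:
  assumes "\<sigma> \<in> mlwords (2*k+3)" "s < k"
  shows "{x \<in> set \<sigma>. block_of k \<sigma> x = s} = {\<sigma> ! (2*s), \<sigma> ! (2*s+1)}"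
proof -
  have "{p. p < 2*k+3 \<and> min (p div 2) k = s} = {2*s, 2*s+1}" using assms(2) by auto
  then show ?thesis using block_eq_image[OF assms(1), of s] by simp
qed

lemma card_block_le:
  assumes "\<sigma> \<in> mlwords (2*k+3)"
  shows "card {x \<in> set \<sigma>. block_of k \<sigma> x = s} \<le> (if s = k then 3 else 2)"
proof (cases s k rule: linorder_cases)
  case less
  then show ?thesis using pair_block_eq[OF assms less] by (simp add: card_insert_if)
next
  case equal
  then show ?thesis using last_block_eq[OF assms] by (simp add: card_insert_if)
next
  case greater
  then have "{x \<in> set \<sigma>. block_of k \<sigma> x = s} = {}" by (auto simp: block_of_def)
  then show ?thesis by (metis card.empty le0)
qed

lemma homogeneous_factor_in_block:
  assumes \<sigma>: "\<sigma> \<in> mlwords (2*k+3)" and "distinct c" "set c \<subseteq> {x \<in> set \<sigma>. block_of k \<sigma> x = s}"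
  shows "length c \<le> (if s = k then 3 else 2)"
    and "length c = 3 \<Longrightarrow> set c = {\<sigma> ! (2*k), \<sigma> ! (2*k+1), \<sigma> ! (2*k+2)}"
proof -
  have card: "length c \<le> card {x \<in> set \<sigma>. block_of k \<sigma> x = s}"
    using assms(2,3) card_mono[OF _ assms(3)] distinct_card[of c] by simp
  then show "length c \<le> (if s = k then 3 else 2)" using card_block_le[OF \<sigma>, of s] by simp
  assume "length c = 3"
  then have "s = k" "card (set c) = card {x \<in> set \<sigma>. block_of k \<sigma> x = s}"
    using card card_block_le[OF \<sigma>, of s] distinct_card[OF assms(2)] by (auto split: if_splits)
  then show "set c = {\<sigma> ! (2*k), \<sigma> ! (2*k+1), \<sigma> ! (2*k+2)}"
    using card_subset_eq[OF _ assms(3)] last_block_eq[OF \<sigma>] by simp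
qed

lemma length_filter_le_count_concat:
  "\<forall>c\<in>set cs. A c \<longrightarrow> x \<in> set c \<Longrightarrow> length (filter A cs) \<le> count (mset (concat cs)) x"
proof (induct cs)
  case (Cons c cs)
  have "x \<in> set c \<Longrightarrow> 0 < count (mset c) x" by simp
  then show ?case using Cons by (auto simp del: count_greater_zero_iff)
qed simp

lemma prod_list_zero_mem: "(0::'a::semiring_1) \<in> set xs \<Longrightarrow> prod_list xs = 0"
  by (induct xs) auto

definition block_homogeneous :: "(nat \<Rightarrow> nat) \<Rightarrow> nat list list \<Rightarrow> bool" where
  "block_homogeneous \<beta> cs \<longleftrightarrow> (\<forall>c\<in>set cs. \<forall>y\<in>set c. \<beta> y = \<beta> (hd c))"

lemma block_proj_prod_lcomm_mixed:
  assumes "\<not> block_homogeneous \<beta> cs"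
  shows "block_proj \<beta> (prod_list (map lcomm cs)) = 0"
proof -
  obtain c where "c \<in> set cs" "\<not> (\<forall>y\<in>set c. \<beta> y = \<beta> (hd c))"
    using assms by (auto simp: block_homogeneous_def)
  moreover obtain i js where "c = i # js" using calculation(2) by (cases c) auto
  ultimately have "c \<in> set cs" "block_proj \<beta> (lcomm c) = 0" using block_proj_lcomm_mixed by auto
  then show ?thesis by (auto simp: block_proj_prod_list o_def intro!: prod_list_zero_mem)
qed

lemma block_proj_Wprime_gen:
  assumes \<sigma>: "\<sigma> \<in> mlwords (2*k+3)" and P: "prod_list (map lcomm cs) \<in> P (2*k+3)"
    and long: "(\<exists>c\<in>set cs. 4 \<le> length c) \<or> 2 \<le> length (filter (\<lambda>c. length c = 3) cs)"
  shows "block_proj (block_of k \<sigma>) (prod_list (map lcomm cs)) = 0"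
proof (cases "block_homogeneous (block_of k \<sigma>) cs")
  case False
  then show ?thesis by (rule block_proj_prod_lcomm_mixed)
next
  case homogeneous: True
  show ?thesis
  proof (cases "prod_list (map lcomm cs) = 0")
    case False
    then obtain u where u: "u \<in> Poly_Mapping.keys (prod_list (map lcomm cs))" by fastforce
    then have "u \<in> mlwords (2*k+3)" "mset u = mset (concat cs)"
      using P keys_prod_lcomm[of cs] unfolding P_iff_keys by blast+
    then have dist: "distinct (concat cs)" and set: "set (concat cs) = set \<sigma>"
      using \<sigma> mlwords_mset_eq[of "concat cs" u] by (auto simp: mlwords_def)
    have "distinct c" "set c \<subseteq> {x \<in> set \<sigma>. block_of k \<sigma> x = block_of k \<sigma> (hd c)}"
      if "c \<in> set cs" for c
      using that homogeneous set dist by (auto simp: distinct_concat_iff block_homogeneous_def)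
    note factor = homogeneous_factor_in_block[OF \<sigma> this]
    have "\<forall>c\<in>set cs. length c \<le> 3"
      using factor(1) by (fastforce split: if_splits)
    moreover have "length (filter (\<lambda>c. length c = 3) cs) \<le> count (mset (concat cs)) (\<sigma> ! (2*k))"
      using factor(2) by (intro length_filter_le_count_concat) blast
    moreover have "count (mset (concat cs)) (\<sigma> ! (2*k)) \<le> 1"
      using dist by (simp add: distinct_count_atmost_1)
    ultimately show ?thesis using long by auto
  qed (simp add: block_proj_zero)
qed

lemma block_proj_Wprime:
  assumes "\<sigma> \<in> mlwords (2*k+3)" "x \<in> Wprime k"
  shows "block_proj (block_of k \<sigma>) x = 0"
proof -
  have "Wprime k \<subseteq> {x. block_proj (block_of k \<sigma>) x = 0}"
    unfolding Wprime_def
    by (rule addgen_least)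
      (auto simp: block_proj_zero block_proj_diff ncprod_eq_prod_list intro: block_proj_Wprime_gen[OF assms(1)])
  then show ?thesis using assms(2) by blast
qed

section \<open>Coordinate functionals\<close>

lemma frag_extend_at_block_in_block_elems:
  "frag_extend (\<lambda>u. frag_of (at_block s u)) p \<in> block_elems s"
proof -
  have "Poly_Mapping.keys p \<subseteq> UNIV" by simp
  then show ?thesis
    by (induct p rule: frag_induction)
      (simp_all add: frag_extend_diff block_elems_diff, auto simp: block_elems_def at_block_def)
qed

lemma lookup_block_proj_prod_lcomm:
  assumes "\<forall>i<length cs. \<forall>x\<in>set (cs ! i). \<beta> x = i" and "\<forall>t. length cs \<le> t \<longrightarrow> \<kappa> t = []"
  shows "Poly_Mapping.lookup (block_proj \<beta> (prod_list (map lcomm cs))) \<kappa> =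
    (\<Prod>i<length cs. Poly_Mapping.lookup (lcomm (cs ! i)) (\<kappa> i))"
proof -
  define Xs where "Xs = map (\<lambda>c. block_proj \<beta> (lcomm c)) cs"
  have Xs: "Xs ! i = frag_extend (\<lambda>u. frag_of (at_block i u)) (lcomm (cs ! i))" if "i < length cs" for i
    using block_proj_lcomm_at_block[of "cs ! i" \<beta> i] assms(1) that by (simp add: Xs_def)
  have "Poly_Mapping.lookup (prod_list Xs) \<kappa> =
      (\<Prod>i<length Xs. Poly_Mapping.lookup (Xs ! i) (at_block (0 + i) (\<kappa> (0 + i))))"
    using assms(2) Xs frag_extend_at_block_in_block_elems
    by (intro lookup_prod_list_block_elems) (auto simp: Xs_def)
  then show ?thesis
    using Xs lookup_frag_extend_at_block by (simp add: Xs_def block_proj_prod_list o_def)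
qed

lemma lookup_lcomm_pair: "a \<noteq> b \<Longrightarrow> Poly_Mapping.lookup (lcomm [a,b]) [a,b] = 1"
  by (simp add: comm_eq ncvar_def mult_single plus_list_def lookup_minus)

lemma lcomm_triple_expand:
  "lcomm [a,b,c] = frag_of [a,b,c] - frag_of [b,a,c] - frag_of [c,a,b] + frag_of [c,b,a]"
  by (simp add: comm_eq ncvar_def mult_single plus_list_def algebra_simps)

lemma lookup_lcomm_triple: "distinct [a,b,c] \<Longrightarrow> Poly_Mapping.lookup (lcomm [a,b,c]) [a,b,c] = 1"
  unfolding lcomm_triple_expand by (simp add: lookup_minus lookup_add)

lemma lookup_lcomm_triple_swapped:
  "distinct [a,b,c] \<Longrightarrow> Poly_Mapping.lookup (lcomm [a,c,b]) [a,b,c] = 0"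
  unfolding lcomm_triple_expand by (simp add: lookup_minus lookup_add)

definition block_key :: "nat \<Rightarrow> nat list \<Rightarrow> blocked_word" where
  "block_key k \<sigma> = (\<lambda>i. if i \<le> k then psi_blocks k \<sigma> ! i else [])"

definition coord :: "nat \<Rightarrow> nat list \<Rightarrow> (nat list \<Rightarrow>\<^sub>0 int) \<Rightarrow> int" where
  "coord k \<sigma> h = Poly_Mapping.lookup (block_proj (block_of k \<sigma>) (psi_lift k h)) (block_key k \<sigma>)"

lemma coord_add: "coord k \<sigma> (a + b) = coord k \<sigma> a + coord k \<sigma> b"
  by (simp add: coord_def psi_lift_add block_proj_add lookup_add)

lemma coord_diff: "coord k \<sigma> (a - b) = coord k \<sigma> a - coord k \<sigma> b"
  by (simp add: coord_def psi_lift_diff block_proj_diff lookup_minus)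

lemma coord_ker_psi: "\<sigma> \<in> mlwords (2*k+3) \<Longrightarrow> h \<in> ker_psi k \<Longrightarrow> coord k \<sigma> h = 0"
  unfolding coord_def ker_psi_def using block_proj_Wprime by simp

lemma psi_blocks_nth_pair:
  "length w = 2*k+3 \<Longrightarrow> i < k \<Longrightarrow> psi_blocks k w ! i = [w ! (2*i), w ! (2*i+1)]"
  by (simp add: psi_blocks_nth nth_append)

lemma psi_blocks_nth_triple:
  "length w = 2*k+3 \<Longrightarrow> psi_blocks k w ! k = [w ! (2*k), w ! (2*k+1), w ! (2*k+2)]"
  by (simp add: psi_blocks_nth nth_append)

lemma length_psi_blocks: "length w = 2*k+3 \<Longrightarrow> length (psi_blocks k w) = k + 1"
  by (simp add: psi_blocks_nth)

definition swap_last :: "nat \<Rightarrow> nat list \<Rightarrow> nat list" where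
  "swap_last k \<sigma> = \<sigma>[2*k+1 := \<sigma> ! (2*k+2), 2*k+2 := \<sigma> ! (2*k+1)]"

lemma coord_eq_prod:
  assumes \<sigma>: "\<sigma> \<in> mlwords (2*k+3)" and "\<tau> = \<sigma> \<or> \<tau> = swap_last k \<sigma>"
  shows "coord k \<sigma> (hb \<tau>) = Poly_Mapping.lookup (lcomm (psi_blocks k \<tau> ! k)) (psi_blocks k \<sigma> ! k)"
proof -
  have d: "distinct \<sigma>" and l: "length \<sigma> = 2*k+3" using mlwords_distinct_length[OF \<sigma>] by auto
  have l\<tau>: "length \<tau> = 2*k+3" using assms(2) l by (auto simp: swap_last_def)
  have pairs: "psi_blocks k \<tau> ! i = [\<sigma> ! (2*i), \<sigma> ! (2*i+1)]" if "i < k" for i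
    using assms(2) psi_blocks_nth_pair[OF l\<tau> that] that by (auto simp: swap_last_def)
  have triple: "set (psi_blocks k \<tau> ! k) = {\<sigma> ! (2*k), \<sigma> ! (2*k+1), \<sigma> ! (2*k+2)}"
    using assms(2) psi_blocks_nth_triple[OF l\<tau>] l by (auto simp: swap_last_def nth_list_update)
  have "\<forall>i<length (psi_blocks k \<tau>). \<forall>x\<in>set (psi_blocks k \<tau> ! i). block_of k \<sigma> x = i"
  proof (intro allI impI ballI)
    fix i x assume "i < length (psi_blocks k \<tau>)" "x \<in> set (psi_blocks k \<tau> ! i)"
    then consider "i < k" "x \<in> {\<sigma> ! (2*i), \<sigma> ! (2*i+1)}" | "i = k" "x \<in> {\<sigma> ! (2*k), \<sigma> ! (2*k+1), \<sigma> ! (2*k+2)}"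
      using length_psi_blocks[OF l\<tau>] pairs triple by (fastforce simp: less_Suc_eq)
    then show "block_of k \<sigma> x = i"
      using pair_block_eq[OF \<sigma>] last_block_eq[OF \<sigma>] by cases blast+
  qed
  then have "coord k \<sigma> (hb \<tau>) =
      (\<Prod>i<k+1. Poly_Mapping.lookup (lcomm (psi_blocks k \<tau> ! i)) (block_key k \<sigma> i))"
    using lookup_block_proj_prod_lcomm[of "psi_blocks k \<tau>" "block_of k \<sigma>" "block_key k \<sigma>"]
      length_psi_blocks[OF l\<tau>]
    by (simp add: coord_def psi_lift_hb psi_gen_eq_prod_blocks[OF l\<tau>] block_key_def)
  also have "\<dots> = Poly_Mapping.lookup (lcomm (psi_blocks k \<tau> ! k)) (psi_blocks k \<sigma> ! k)"
  proof -
    have "Poly_Mapping.lookup (lcomm (psi_blocks k \<tau> ! i)) (block_key k \<sigma> i) = 1" if "i < k" for i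
      using pairs[OF that] psi_blocks_nth_pair[OF l that] lookup_lcomm_pair d l that
      by (simp add: block_key_def nth_eq_iff_index_eq)
    then show ?thesis by (simp add: block_key_def)
  qed
  finally show ?thesis .
qed

lemma coord_self:
  assumes "\<sigma> \<in> mlwords (2*k+3)" shows "coord k \<sigma> (hb \<sigma>) = 1"
proof -
  have "distinct [\<sigma> ! (2*k), \<sigma> ! (2*k+1), \<sigma> ! (2*k+2)]"
    using mlwords_distinct_length[OF assms] by (simp add: nth_eq_iff_index_eq)
  then show ?thesis
    using coord_eq_prod[OF assms, of \<sigma>] mlwords_distinct_length[OF assms]
    by (simp add: psi_blocks_nth_triple lookup_lcomm_triple del: lcomm.simps)
qed

lemma coord_swap_last:
  assumes "\<sigma> \<in> mlwords (2*k+3)" shows "coord k \<sigma> (hb (swap_last k \<sigma>)) = 0"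
proof -
  have "distinct [\<sigma> ! (2*k), \<sigma> ! (2*k+1), \<sigma> ! (2*k+2)]"
    using mlwords_distinct_length[OF assms] by (simp add: nth_eq_iff_index_eq)
  then show ?thesis
    using coord_eq_prod[OF assms, of "swap_last k \<sigma>"] mlwords_distinct_length[OF assms]
    by (simp add: psi_blocks_nth_triple swap_last_def nth_list_update lookup_lcomm_triple_swapped
        del: lcomm.simps)
qed

section \<open>Normal words\<close>

definition normal_word :: "nat \<Rightarrow> nat list \<Rightarrow> bool" where
  "normal_word k w \<longleftrightarrow> w \<in> mlwords (2*k+3) \<and> (\<forall>l\<le>k. w ! (2*l) < w ! (2*l+1))
     \<and> (\<forall>l. Suc l < k \<longrightarrow> w ! (2*l) < w ! (2*l+2)) \<and> w ! (2*k) < w ! (2*k+2)"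

lemma normal_word_firsts_sorted:
  "normal_word k w \<Longrightarrow> sorted_wrt (<) (map (\<lambda>j. w ! (2*j)) [0..<k])"
  by (subst sorted_wrt_iff_nth_Suc_transp) (auto simp: normal_word_def transp_on_def)

lemma homogeneous_last_block:
  assumes \<sigma>: "\<sigma> \<in> mlwords (2*k+3)" and \<tau>: "\<tau> \<in> mlwords (2*k+3)"
    and hom: "block_homogeneous (block_of k \<sigma>) (psi_blocks k \<tau>)"
  shows "{\<tau> ! (2*k), \<tau> ! (2*k+1), \<tau> ! (2*k+2)} = {\<sigma> ! (2*k), \<sigma> ! (2*k+1), \<sigma> ! (2*k+2)}"
proof -
  have l\<tau>: "length \<tau> = 2*k+3" and "distinct \<tau>" using mlwords_distinct_length[OF \<tau>] by auto
  let ?c = "[\<tau> ! (2*k), \<tau> ! (2*k+1), \<tau> ! (2*k+2)]"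
  have "distinct ?c" using \<open>distinct \<tau>\<close> l\<tau> by (simp add: nth_eq_iff_index_eq)
  moreover have "set ?c \<subseteq> {x \<in> set \<sigma>. block_of k \<sigma> x = block_of k \<sigma> (hd ?c)}"
  proof -
    have "?c \<in> set (psi_blocks k \<tau>)" using l\<tau> by (simp add: psi_blocks_nth)
    then have "\<forall>y\<in>set ?c. block_of k \<sigma> y = block_of k \<sigma> (hd ?c)"
      using hom unfolding block_homogeneous_def by blast
    moreover have "set ?c \<subseteq> set \<sigma>"
      using \<sigma> \<tau> l\<tau> nth_mem[of _ \<tau>] by (simp add: mlwords_def)
    ultimately show ?thesis by blast
  qed
  ultimately have "set ?c = {\<sigma> ! (2*k), \<sigma> ! (2*k+1), \<sigma> ! (2*k+2)}"
    by (rule homogeneous_factor_in_block(2)[OF \<sigma>]) simp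
  then show ?thesis by simp
qed

lemma homogeneous_pair_block:
  assumes \<sigma>: "normal_word k \<sigma>" and \<tau>: "normal_word k \<tau>"
    and hom: "block_homogeneous (block_of k \<sigma>) (psi_blocks k \<tau>)" and j: "j < k"
  shows "\<exists>s<k. \<tau> ! (2*j) = \<sigma> ! (2*s) \<and> \<tau> ! (2*j+1) = \<sigma> ! (2*s+1)"
proof -
  have \<sigma>m: "\<sigma> \<in> mlwords (2*k+3)" and \<tau>m: "\<tau> \<in> mlwords (2*k+3)"
    using \<sigma> \<tau> by (auto simp: normal_word_def)
  have l\<tau>: "length \<tau> = 2*k+3" and d\<tau>: "distinct \<tau>" using mlwords_distinct_length[OF \<tau>m] by auto
  let ?s = "block_of k \<sigma> (\<tau> ! (2*j))"
  have pair: "{\<tau> ! (2*j), \<tau> ! (2*j+1)} \<subseteq> {x \<in> set \<sigma>. block_of k \<sigma> x = ?s}"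
  proof -
    have "[\<tau> ! (2*j), \<tau> ! (2*j+1)] \<in> set (psi_blocks k \<tau>)"
      using j psi_blocks_nth_pair[OF l\<tau> j] length_psi_blocks[OF l\<tau>] nth_mem[of j "psi_blocks k \<tau>"]
      by simp
    then have "block_of k \<sigma> (\<tau> ! (2*j+1)) = ?s"
      using hom unfolding block_homogeneous_def by fastforce
    moreover have "\<tau> ! (2*j) \<in> set \<tau>" "\<tau> ! (2*j+1) \<in> set \<tau>"
      using l\<tau> j by (simp_all add: nth_mem)
    then have "\<tau> ! (2*j) \<in> set \<sigma>" "\<tau> ! (2*j+1) \<in> set \<sigma>"
      using \<sigma>m \<tau>m by (simp_all add: mlwords_def)
    ultimately show ?thesis by blast
  qed
  have "?s \<noteq> k"
  proof
    assume "?s = k"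
    then have "\<tau> ! (2*j) \<in> {\<tau> ! (2*k), \<tau> ! (2*k+1), \<tau> ! (2*k+2)}"
      using pair last_block_eq[OF \<sigma>m] homogeneous_last_block[OF \<sigma>m \<tau>m hom] by auto
    then show False using d\<tau> l\<tau> j by (auto simp: nth_eq_iff_index_eq)
  qed
  then have s: "?s < k" by (simp add: block_of_def)
  have "\<tau> ! (2*j) \<noteq> \<tau> ! (2*j+1)" using d\<tau> l\<tau> j by (simp add: nth_eq_iff_index_eq)
  moreover have "\<tau> ! (2*j) < \<tau> ! (2*j+1)" "\<sigma> ! (2*?s) < \<sigma> ! (2*?s+1)"
    using \<sigma> \<tau> j s by (simp_all add: normal_word_def)
  ultimately show ?thesis using pair pair_block_eq[OF \<sigma>m s] s by auto
qed

lemma homogeneous_pairs_eq: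
  assumes \<sigma>: "normal_word k \<sigma>" and \<tau>: "normal_word k \<tau>"
    and hom: "block_homogeneous (block_of k \<sigma>) (psi_blocks k \<tau>)" and j: "j < k"
  shows "\<tau> ! (2*j) = \<sigma> ! (2*j) \<and> \<tau> ! (2*j+1) = \<sigma> ! (2*j+1)"
proof -
  have d\<sigma>: "distinct \<sigma>" "length \<sigma> = 2*k+3"
    using \<sigma> mlwords_distinct_length by (auto simp: normal_word_def)
  define F\<tau> where "F\<tau> = map (\<lambda>j. \<tau> ! (2*j)) [0..<k]"
  define F\<sigma> where "F\<sigma> = map (\<lambda>j. \<sigma> ! (2*j)) [0..<k]"
  have sorted: "sorted_wrt (<) F\<tau>" "sorted_wrt (<) F\<sigma>"
    using normal_word_firsts_sorted[OF \<tau>] normal_word_firsts_sorted[OF \<sigma>] by (simp_all add: F\<tau>_def F\<sigma>_def)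
  have "set F\<tau> \<subseteq> set F\<sigma>"
    using homogeneous_pair_block[OF \<sigma> \<tau> hom] by (force simp: F\<tau>_def F\<sigma>_def)
  moreover have "card (set F\<tau>) = k" "card (set F\<sigma>) = k"
    using sorted distinct_card by (fastforce simp: strict_sorted_iff F\<tau>_def F\<sigma>_def)+
  ultimately have "set F\<tau> = set F\<sigma>" by (intro card_subset_eq) auto
  then have "F\<tau> = F\<sigma>" using sorted by (intro sorted_distinct_set_unique) (auto simp: strict_sorted_iff)
  then have first: "\<tau> ! (2*j) = \<sigma> ! (2*j)"
    using j arg_cong[OF \<open>F\<tau> = F\<sigma>\<close>, of "\<lambda>F. F ! j"] by (simp add: F\<tau>_def F\<sigma>_def)
  obtain s where s: "s < k" "\<tau> ! (2*j) = \<sigma> ! (2*s)" "\<tau> ! (2*j+1) = \<sigma> ! (2*s+1)"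
    using homogeneous_pair_block[OF \<sigma> \<tau> hom j] by blast
  then have "s = j" using first d\<sigma> j by (simp add: nth_eq_iff_index_eq)
  then show ?thesis using s first by simp
qed

lemma triple_least_eq:
  fixes a b c x y z :: nat
  assumes "{a, b, c} = {x, y, z}" "a < b" "a < c" "b \<noteq> c" "x < y" "x < z"
  shows "a = x \<and> (b = y \<and> c = z \<or> b = z \<and> c = y)"
proof -
  have "a \<in> {x,y,z}" "b \<in> {x,y,z}" "c \<in> {x,y,z}" "x \<in> {a,b,c}" "y \<in> {a,b,c}" "z \<in> {a,b,c}"
    using assms(1) by blast+
  then show ?thesis using assms(2-) by auto
qed

lemma homogeneous_normal_word_eq:
  assumes \<sigma>: "normal_word k \<sigma>" and \<tau>: "normal_word k \<tau>"
    and hom: "block_homogeneous (block_of k \<sigma>) (psi_blocks k \<tau>)"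
  shows "\<tau> = \<sigma> \<or> \<tau> = swap_last k \<sigma>"
proof -
  have \<sigma>m: "\<sigma> \<in> mlwords (2*k+3)" and \<tau>m: "\<tau> \<in> mlwords (2*k+3)"
    using \<sigma> \<tau> by (auto simp: normal_word_def)
  have l\<sigma>: "length \<sigma> = 2*k+3" and l\<tau>: "length \<tau> = 2*k+3" and d\<tau>: "distinct \<tau>"
    using mlwords_distinct_length[OF \<sigma>m] mlwords_distinct_length[OF \<tau>m] by auto
  have front: "\<tau> ! i = \<sigma> ! i" if "i < 2*k" for i
  proof -
    have "i = 2*(i div 2) \<or> i = 2*(i div 2)+1" "i div 2 < k" using that by auto
    then show ?thesis using homogeneous_pairs_eq[OF \<sigma> \<tau> hom] by metis
  qed
  have "\<tau> ! (2*k+1) \<noteq> \<tau> ! (2*k+2)" using d\<tau> l\<tau> by (simp add: nth_eq_iff_index_eq)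
  then have "\<tau> ! (2*k) = \<sigma> ! (2*k) \<and> (\<tau> ! (2*k+1) = \<sigma> ! (2*k+1) \<and> \<tau> ! (2*k+2) = \<sigma> ! (2*k+2) \<or>
      \<tau> ! (2*k+1) = \<sigma> ! (2*k+2) \<and> \<tau> ! (2*k+2) = \<sigma> ! (2*k+1))"
    using triple_least_eq[OF homogeneous_last_block[OF \<sigma>m \<tau>m hom]] \<sigma> \<tau>
    by (simp add: normal_word_def)
  then show ?thesis
  proof (elim conjE disjE)
    assume "\<tau> ! (2*k) = \<sigma> ! (2*k)" "\<tau> ! (2*k+1) = \<sigma> ! (2*k+1)" "\<tau> ! (2*k+2) = \<sigma> ! (2*k+2)"
    then have "\<tau> = \<sigma>" using front l\<sigma> l\<tau>
      by (intro nth_equalityI) (auto simp: less_Suc_eq eval_nat_numeral)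
    then show ?thesis ..
  next
    assume "\<tau> ! (2*k) = \<sigma> ! (2*k)" "\<tau> ! (2*k+1) = \<sigma> ! (2*k+2)" "\<tau> ! (2*k+2) = \<sigma> ! (2*k+1)"
    then have "\<tau> = swap_last k \<sigma>" using front l\<sigma> l\<tau>
      by (intro nth_equalityI) (auto simp: swap_last_def nth_list_update less_Suc_eq eval_nat_numeral)
    then show ?thesis ..
  qed
qed

lemma coord_normal_word:
  assumes \<sigma>: "normal_word k \<sigma>" and \<tau>: "normal_word k \<tau>"
  shows "coord k \<sigma> (hb \<tau>) = (if \<tau> = \<sigma> then 1 else 0)"
proof -
  have \<sigma>m: "\<sigma> \<in> mlwords (2*k+3)" and l\<tau>: "length \<tau> = 2*k+3"
    using \<sigma> \<tau> length_mlwords by (auto simp: normal_word_def)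
  consider "\<tau> = \<sigma>" | "\<tau> = swap_last k \<sigma>" "\<tau> \<noteq> \<sigma>"
    | "\<not> block_homogeneous (block_of k \<sigma>) (psi_blocks k \<tau>)" "\<tau> \<noteq> \<sigma>"
    using homogeneous_normal_word_eq[OF \<sigma> \<tau>] by blast
  then show ?thesis
  proof cases
    case 3
    then show ?thesis
      using block_proj_prod_lcomm_mixed
      by (simp add: coord_def psi_lift_hb psi_gen_eq_prod_blocks[OF l\<tau>] block_proj_zero)
  qed (simp_all add: coord_self[OF \<sigma>m] coord_swap_last[OF \<sigma>m])
qed

section \<open>Reduction to normal words\<close>

definition Q_plus_normal :: "nat \<Rightarrow> (nat list \<Rightarrow>\<^sub>0 int) set" where
  "Q_plus_normal k = {q + c | q c. q \<in> Q k \<and> Poly_Mapping.keys c \<subseteq> Collect (normal_word k)}"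

lemma Q_subset_Q_plus_normal: "q \<in> Q k \<Longrightarrow> q \<in> Q_plus_normal k"
  unfolding Q_plus_normal_def by (intro CollectI exI[of _ q] exI[of _ 0]) simp

lemma normal_word_in_Q_plus_normal: "normal_word k \<tau> \<Longrightarrow> hb \<tau> \<in> Q_plus_normal k"
  unfolding Q_plus_normal_def
  by (intro CollectI exI[of _ 0] exI[of _ "hb \<tau>"]) (simp add: Q_def addgen.zero hb_def)

lemma Q_plus_normal_diff:
  assumes "a \<in> Q_plus_normal k" "b \<in> Q_plus_normal k"
  shows "a - b \<in> Q_plus_normal k"
proof -
  obtain q1 c1 q2 c2 where "q1 \<in> Q k" "Poly_Mapping.keys c1 \<subseteq> Collect (normal_word k)" "a = q1 + c1"
      "q2 \<in> Q k" "Poly_Mapping.keys c2 \<subseteq> Collect (normal_word k)" "b = q2 + c2"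
    using assms by (auto simp: Q_plus_normal_def)
  moreover have "q1 - q2 \<in> Q k" using calculation by (simp add: Q_def addgen.diff)
  ultimately show ?thesis unfolding Q_plus_normal_def
    by (intro CollectI exI[of _ "q1 - q2"] exI[of _ "c1 - c2"]) (use keys_diff[of c1 c2] in auto)
qed

lemma Q_plus_normal_add:
  assumes "a \<in> Q_plus_normal k" "b \<in> Q_plus_normal k"
  shows "a + b \<in> Q_plus_normal k"
proof -
  have "0 \<in> Q_plus_normal k" using Q_subset_Q_plus_normal by (simp add: Q_def addgen.zero)
  then have "a - (0 - b) \<in> Q_plus_normal k" using assms by (intro Q_plus_normal_diff)
  then show ?thesis by simp
qed

lemma Q_gen_in_Q: "g \<in> Q_gens k \<Longrightarrow> g \<in> Q k"
  by (simp add: Q_eq_addgen_Q_gens addgen.gen)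

lemma Q_swap_pair:
  "a @ [p,q] @ b \<in> mlwords (2*k+3) \<Longrightarrow> 1 \<le> l \<Longrightarrow> l \<le> k+1 \<Longrightarrow> length a = 2*l-2
   \<Longrightarrow> hb (a @ [p, q] @ b) + hb (a @ [q, p] @ b) \<in> Q k"
  by (rule Q_gen_in_Q) (unfold Q_gens_def, blast)

lemma Q_swap_pairs:
  "a @ [p,q,r,s] @ b \<in> mlwords (2*k+3) \<Longrightarrow> 2 \<le> l \<Longrightarrow> l \<le> k \<Longrightarrow> length a = 2*l-4
   \<Longrightarrow> hb (a @ [p, q, r, s] @ b) - hb (a @ [r, s, p, q] @ b) \<in> Q k"
  by (rule Q_gen_in_Q) (unfold Q_gens_def, blast)

lemma Q_rotate_triple:
  "a @ [p,q,r] \<in> mlwords (2*k+3) \<Longrightarrow> length a = 2*k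
   \<Longrightarrow> hb (a @ [p, q, r]) + hb (a @ [q, r, p]) + hb (a @ [r, p, q]) \<in> Q k"
  by (rule Q_gen_in_Q) (unfold Q_gens_def, blast)

lemma lex_append_less: "length u = length v \<Longrightarrow> x < y \<Longrightarrow> (a @ x # u, a @ y # v) \<in> lex less_than"
  by (auto simp: lex_conv)

lemma split_pair: "n + 2 \<le> length w \<Longrightarrow> w = take n w @ [w ! n, w ! (n+1)] @ drop (n+2) w"
proof -
  assume "n + 2 \<le> length w"
  then have "take (n+2) w = take n w @ [w ! n, w ! (n+1)]"
    by (simp add: take_Suc_conv_app_nth numeral_2_eq_2)
  then show ?thesis by (metis append.assoc append_take_drop_id)
qed

lemma split_quadruple:
  "n + 4 \<le> length w \<Longrightarrow> w = take n w @ [w ! n, w ! (n+1), w ! (n+2), w ! (n+3)] @ drop (n+4) w"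
proof -
  assume "n + 4 \<le> length w"
  then have "take (n+4) w = take n w @ [w ! n, w ! (n+1), w ! (n+2), w ! (n+3)]"
    by (simp add: take_Suc_conv_app_nth numeral_eq_Suc)
  then show ?thesis by (metis append.assoc append_take_drop_id)
qed

lemma reduce_swap_pair:
  assumes w: "w \<in> mlwords (2*k+3)" and l: "l \<le> k" and gt: "w ! (2*l+1) < w ! (2*l)"
  obtains w' where "(w', w) \<in> lex less_than" "w' \<in> mlwords (2*k+3)" "hb w + hb w' \<in> Q k"
proof -
  define a where "a = take (2*l) w"
  define b where "b = drop (2*l+2) w"
  let ?p = "w ! (2*l)" and ?q = "w ! (2*l+1)"
  have ws: "w = a @ [?p, ?q] @ b"
    unfolding a_def b_def using split_pair[of "2*l" w] length_mlwords[OF w] l by simp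
  have la: "length a = 2*(l+1) - 2" using length_mlwords[OF w] l by (simp add: a_def)
  show ?thesis
  proof (rule that)
    show "(a @ [?q, ?p] @ b, w) \<in> lex less_than"
      using lex_append_less[of "?p # b" "?q # b" ?q ?p a] gt ws by simp
    show "a @ [?q, ?p] @ b \<in> mlwords (2*k+3)"
      using mlwords_swap_pair[of a ?p ?q b] w ws by simp
    show "hb w + hb (a @ [?q, ?p] @ b) \<in> Q k"
      using Q_swap_pair[of a ?p ?q b k "l+1"] w ws l la by simp
  qed
qed

lemma reduce_swap_pairs:
  assumes w: "w \<in> mlwords (2*k+3)" and l: "Suc l < k" and gt: "w ! (2*l+2) < w ! (2*l)"
  obtains w' where "(w', w) \<in> lex less_than" "w' \<in> mlwords (2*k+3)" "hb w - hb w' \<in> Q k"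
proof -
  define a where "a = take (2*l) w"
  define b where "b = drop (2*l+4) w"
  let ?p = "w ! (2*l)" and ?q = "w ! (2*l+1)" and ?r = "w ! (2*l+2)" and ?s = "w ! (2*l+3)"
  have ws: "w = a @ [?p, ?q, ?r, ?s] @ b"
    unfolding a_def b_def using split_quadruple[of "2*l" w] length_mlwords[OF w] l by simp
  have la: "length a = 2*(l+2) - 4" using length_mlwords[OF w] l by (simp add: a_def)
  show ?thesis
  proof (rule that)
    show "(a @ [?r, ?s, ?p, ?q] @ b, w) \<in> lex less_than"
      using lex_append_less[of "[?s, ?p, ?q] @ b" "[?q, ?r, ?s] @ b" ?r ?p a] gt ws by simp
    show "a @ [?r, ?s, ?p, ?q] @ b \<in> mlwords (2*k+3)"
      using mlwords_swap_pairs[of a ?p ?q ?r ?s b] w ws by simp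
    show "hb w - hb (a @ [?r, ?s, ?p, ?q] @ b) \<in> Q k"
      using Q_swap_pairs[of a ?p ?q ?r ?s b k "l+2"] w ws l la by simp
  qed
qed

lemma reduce_last_triple:
  assumes w: "w \<in> mlwords (2*k+3)" and gt: "w ! (2*k+2) < w ! (2*k)"
  obtains w2 w3 where "(w2, w) \<in> lex less_than" "w2 \<in> mlwords (2*k+3)"
    "(w3, w) \<in> lex less_than" "w3 \<in> mlwords (2*k+3)" "hb w + hb w2 - hb w3 \<in> Q k"
proof -
  define a where "a = take (2*k) w"
  let ?x = "w ! (2*k)" and ?y = "w ! (2*k+1)" and ?z = "w ! (2*k+2)"
  have l: "length w = 2*k+3" using length_mlwords[OF w] .
  have "drop (2*k+2) w = [?z]" using Cons_nth_drop_Suc[of "2*k+2" w] l by simp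
  then have ws: "w = a @ [?x, ?y, ?z]" unfolding a_def using split_pair[of "2*k" w] l by simp
  have la: "length a = 2*k" using l by (simp add: a_def)
  have m1: "a @ [?y, ?z, ?x] \<in> mlwords (2*k+3)" using mlwords_rotate_triple[of a ?x ?y ?z] w ws by simp
  have m2: "a @ [?z, ?x, ?y] \<in> mlwords (2*k+3)" using mlwords_rotate_triple[OF m1] .
  have m3: "a @ [?z, ?y, ?x] \<in> mlwords (2*k+3)" using mlwords_swap_pair[of a ?y ?z "[?x]"] m1 by simp
  have "hb w + hb (a @ [?y, ?z, ?x]) + hb (a @ [?z, ?x, ?y]) \<in> Q k"
    using Q_rotate_triple[of a ?x ?y ?z k] w ws la by simp
  moreover have "hb (a @ [?y, ?z, ?x]) + hb (a @ [?z, ?y, ?x]) \<in> Q k"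
    using Q_swap_pair[of a ?y ?z "[?x]" k "k+1"] m1 la by simp
  ultimately have "(hb w + hb (a @ [?y, ?z, ?x]) + hb (a @ [?z, ?x, ?y]))
      - (hb (a @ [?y, ?z, ?x]) + hb (a @ [?z, ?y, ?x])) \<in> Q k"
    unfolding Q_def by (rule addgen.diff)
  then have "hb w + hb (a @ [?z, ?x, ?y]) - hb (a @ [?z, ?y, ?x]) \<in> Q k"
    by (simp add: algebra_simps)
  moreover have "(a @ ?z # [?x, ?y], a @ ?x # [?y, ?z]) \<in> lex less_than"
    "(a @ ?z # [?y, ?x], a @ ?x # [?y, ?z]) \<in> lex less_than"
    using gt by (intro lex_append_less; simp)+
  ultimately show ?thesis using that m2 m3 ws by simp
qed

lemma not_normal_word_cases [consumes 2, case_names swap_pair swap_pairs last_triple]: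
  assumes w: "w \<in> mlwords (2*k+3)" and "\<not> normal_word k w"
  obtains l where "l \<le> k" "w ! (2*l+1) < w ! (2*l)"
    | l where "Suc l < k" "w ! (2*l+2) < w ! (2*l)"
    | "w ! (2*k+2) < w ! (2*k)"
proof -
  have l: "length w = 2*k+3" and d: "distinct w" using mlwords_distinct_length[OF w] by auto
  have ne: "w ! i \<noteq> w ! j" if "i < 2*k+3" "j < 2*k+3" "i \<noteq> j" for i j
    using d l that by (simp add: nth_eq_iff_index_eq)
  consider (swap_pair) l where "l \<le> k" "w ! (2*l+1) < w ! (2*l)"
    | (swap_pairs) l where "Suc l < k" "w ! (2*l+2) < w ! (2*l)"
    | (none) "\<forall>l\<le>k. \<not> w ! (2*l+1) < w ! (2*l)" "\<forall>l. Suc l < k \<longrightarrow> \<not> w ! (2*l+2) < w ! (2*l)"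
    by blast
  then show ?thesis
  proof cases
    case none
    have "w ! (2*k+2) < w ! (2*k)"
    proof (rule ccontr)
      assume "\<not> w ! (2*k+2) < w ! (2*k)"
      then have "normal_word k w"
        using w none ne[of "2*_" "2*_+1"] ne[of "2*_" "2*_+2"] ne[of "2*k" "2*k+2"]
        by (auto simp: normal_word_def not_less intro!: le_neq_implies_less)
      then show False using assms(2) by contradiction
    qed
    then show ?thesis by (rule that(3))
  qed (use that in blast)+
qed

lemma hb_in_Q_plus_normal: "w \<in> mlwords (2*k+3) \<Longrightarrow> hb w \<in> Q_plus_normal k"
proof (induct w rule: wf_induct[OF wf_lex[OF wf_less_than]])
  case (1 w)
  have IH: "\<And>w'. (w', w) \<in> lex less_than \<Longrightarrow> w' \<in> mlwords (2*k+3) \<Longrightarrow> hb w' \<in> Q_plus_normal k"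
    using 1(1) by blast
  note w = 1(2)
  show ?case
  proof (cases "normal_word k w")
    case True then show ?thesis by (rule normal_word_in_Q_plus_normal)
  next
    case False
    from w False show ?thesis
    proof (cases rule: not_normal_word_cases)
      case (swap_pair l)
      then obtain w' where "(w', w) \<in> lex less_than" "w' \<in> mlwords (2*k+3)" "hb w + hb w' \<in> Q k"
        using reduce_swap_pair[OF w] by blast
      then show ?thesis
        using Q_plus_normal_diff[OF Q_subset_Q_plus_normal IH] by fastforce
    next
      case (swap_pairs l)
      then obtain w' where "(w', w) \<in> lex less_than" "w' \<in> mlwords (2*k+3)" "hb w - hb w' \<in> Q k"
        using reduce_swap_pairs[OF w] by blast
      then show ?thesis
        using Q_plus_normal_add[OF Q_subset_Q_plus_normal IH] by fastforce
    next
      case last_triple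
      then obtain w2 w3 where "(w2, w) \<in> lex less_than" "w2 \<in> mlwords (2*k+3)"
        "(w3, w) \<in> lex less_than" "w3 \<in> mlwords (2*k+3)" "hb w + hb w2 - hb w3 \<in> Q k"
        using reduce_last_triple[OF w] by blast
      then show ?thesis
        using Q_plus_normal_diff[OF Q_plus_normal_add[OF Q_subset_Q_plus_normal IH] IH, of _ w3 w2]
        by fastforce
    qed
  qed
qed

lemma H_subset_Q_plus_normal: "H k \<subseteq> Q_plus_normal k"
proof
  fix h assume "h \<in> H k"
  then have "Poly_Mapping.keys h \<subseteq> mlwords (2*k+3)" by (simp add: H_def)
  then show "h \<in> Q_plus_normal k"
  proof (induct h rule: frag_induction)
    case zero
    then show ?case using Q_subset_Q_plus_normal by (simp add: Q_def addgen.zero)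
  next
    case (one w)
    then show ?case using hb_in_Q_plus_normal by (simp add: hb_def)
  next
    case (diff a b)
    then show ?case by (rule Q_plus_normal_diff)
  qed
qed

lemma coord_normal_span:
  assumes "normal_word k \<sigma>" "Poly_Mapping.keys c \<subseteq> Collect (normal_word k)"
  shows "coord k \<sigma> c = Poly_Mapping.lookup c \<sigma>"
  using assms(2)
proof (induct c rule: frag_induction)
  case zero then show ?case by (simp add: coord_def psi_lift_def block_proj_zero)
next
  case (one \<tau>)
  then show ?case using coord_normal_word[OF assms(1), of \<tau>] by (simp add: hb_def)
next
  case (diff a b) then show ?case by (simp add: coord_diff lookup_minus)
qed

lemma ker_psi_subset_Q: "ker_psi k \<subseteq> Q k"
proof
  fix h assume h: "h \<in> ker_psi k"
  then have "h \<in> Q_plus_normal k" using H_subset_Q_plus_normal by (auto simp: ker_psi_def)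
  then obtain q c where q: "q \<in> Q k" and c: "Poly_Mapping.keys c \<subseteq> Collect (normal_word k)"
    and hqc: "h = q + c"
    unfolding Q_plus_normal_def by blast
  have "Poly_Mapping.lookup c \<sigma> = 0" if "\<sigma> \<in> Poly_Mapping.keys c" for \<sigma>
  proof -
    have \<sigma>: "normal_word k \<sigma>" using that c by blast
    then have "\<sigma> \<in> mlwords (2*k+3)" by (simp add: normal_word_def)
    then have "coord k \<sigma> h = 0" "coord k \<sigma> q = 0"
      using coord_ker_psi h q Q_subset_ker_psi by blast+
    then show ?thesis using coord_normal_span[OF \<sigma> c] hqc by (simp add: coord_add)
  qed
  then have "c = 0" by (metis in_keys_iff poly_mapping_eqI lookup_zero)
  then show "h \<in> Q k" using q hqc by simp
qed

theorem lemma3p7: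
  fixes k :: nat
  assumes "k \<ge> 1"
  shows "ker_psi k = Q k"
  using ker_psi_subset_Q Q_subset_ker_psi by blast

end
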